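(* Let $G$ be a finite non-abelian group (written additively) of even order $n$ which possesses a subgroup of index $2$. Then (i) if $n=6$, then $cr(G)=4$ (here $G$ is the symmetric group $S_3$); (ii) otherwise, $cr(G)=n/2$.
   Context: For a subset $S=\{a_1,\dots,a_k\}$ of a finite additively written group $G$, $\sum(S)$ denotes the set of all elements $a_{i_1}+\cdots+a_{i_l}$ with $1\le l\le k$ and $i_1,\dots,i_l$ pairwise distinct indices (in any order). The critical number $cr(G)$ is the smallest integer $t$ such that every subset $S\subseteq G\setminus\{0\}$ with $|S|\ge t$ satisfies $\sum(S)=G$. *)

theory Defs
  imports "HOL-Algebra.Algebra"
begin

text \<open>Product (the group's "sum") of a list of elements, in list order.\<close>
definition list_prod :: "('a, 'b) monoid_scheme \<Rightarrow> 'a list \<Rightarrow> 'a" where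
  "list_prod G xs = foldr (\<lambda>x y. x \<otimes>\<^bsub>G\<^esub> y) xs \<one>\<^bsub>G\<^esub>"

definition subset_sums :: "('a, 'b) monoid_scheme \<Rightarrow> 'a set \<Rightarrow> 'a set" where
  "subset_sums G S = {list_prod G xs | xs. xs \<noteq> [] \<and> distinct xs \<and> set xs \<subseteq> S}"

definition crit_num :: "('a, 'b) monoid_scheme \<Rightarrow> nat" where
  "crit_num G = (LEAST t. \<forall>S. S \<subseteq> carrier G - {\<one>\<^bsub>G\<^esub>} \<longrightarrow> t \<le> card S
                   \<longrightarrow> subset_sums G S = carrier G)"

end

theory Submission
  imports Defs
begin

text \<open>
  Let \<open>H\<close> be a subgroup of index 2 and \<open>m = |H|\<close>. All subset products of \<open>H - {1}\<close> stay in
  \<open>H\<close>, so \<open>cr(G) \<ge> m\<close>. Conversely split \<open>S\<close>, \<open>|S| \<ge> m\<close>, into \<open>S_in = S \<inter> H\<close> and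
  \<open>S_out = S - H\<close>, and let \<open>K\<close> be the set of products of (possibly empty) sets of distinct
  elements of \<open>S_in\<close>, so \<open>|K| > |S_in|\<close>. Since the product of two elements outside \<open>H\<close> lies in
  \<open>H\<close>, a pigeonhole argument inside one coset writes every element outside \<open>H\<close> as \<open>k y\<close> and, if
  \<open>|S| > m\<close>, every element of \<open>H\<close> as \<open>u k v\<close> (\<open>k \<in> K\<close>; \<open>u, v, y \<in> S_out\<close>). If \<open>|S| = m \<ge> 4\<close>
  and some \<open>g \<in> H\<close> is missed, the counting becomes tight: \<open>K = S_in \<union> {1}\<close>, and the set \<open>D\<close> of
  products of two distinct elements of \<open>S_out\<close> satisfies \<open>|D| = |S_out| - 1\<close> and
  \<open>H = K \<union> g D\<^sup>-\<^sup>1\<close>. The cases \<open>S_in = {}\<close>, \<open>|S_out| = 2\<close> and \<open>|S_out| \<ge> 3\<close> (where \<open>S_out\<close>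
  turns out to be a coset of its left stabiliser) each produce a representation of \<open>g\<close> or force
  \<open>G\<close> to be abelian. For \<open>m = 3\<close> the group is \<open>S\<^sub>3\<close>, whose three involutions have no subset
  product equal to \<open>1\<close>, so \<open>cr(G) = 4\<close> there; \<open>m \<le> 2\<close> would make \<open>G\<close> abelian.
\<close>

lemma ex_not_mem_of_card_less:
  "finite A \<Longrightarrow> finite B \<Longrightarrow> card B < card A \<Longrightarrow> \<exists>x\<in>A. x \<notin> B"
  by (metis card_mono not_le subsetI)

lemma eq_of_card_eq_2:
  assumes "card A = 2" "x \<in> A" "y \<in> A" "z \<in> A" "y \<noteq> x" "z \<noteq> x"
  shows "y = z"
  using assms by (auto simp: card_2_iff)

context group
begin

lemma list_prod_Nil [simp]: "list_prod G [] = \<one>"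
  by (simp add: list_prod_def)

lemma list_prod_Cons [simp]: "list_prod G (x # xs) = x \<otimes> list_prod G xs"
  by (simp add: list_prod_def)

lemma list_prod_closed [intro]: "set xs \<subseteq> carrier G \<Longrightarrow> list_prod G xs \<in> carrier G"
  by (induction xs) auto

lemma list_prod_append:
  "set xs \<subseteq> carrier G \<Longrightarrow> set ys \<subseteq> carrier G \<Longrightarrow>
   list_prod G (xs @ ys) = list_prod G xs \<otimes> list_prod G ys"
  by (induction xs) (auto simp: m_assoc list_prod_closed)

lemma list_prod_mem_subgroup: "subgroup H G \<Longrightarrow> set xs \<subseteq> H \<Longrightarrow> list_prod G xs \<in> H"
  by (induction xs) (auto intro: subgroup.m_closed subgroup.one_closed)

definition subset_sums0 :: "'a set \<Rightarrow> 'a set" where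
  "subset_sums0 S = {list_prod G xs | xs. distinct xs \<and> set xs \<subseteq> S}"

lemma subset_sumsI:
  "distinct xs \<Longrightarrow> xs \<noteq> [] \<Longrightarrow> set xs \<subseteq> S \<Longrightarrow> list_prod G xs \<in> subset_sums G S"
  unfolding subset_sums_def by blast

lemma subset_sums0_eq: "subset_sums0 S = insert \<one> (subset_sums G S)"
proof -
  have "list_prod G xs \<in> insert \<one> (subset_sums G S)" if "distinct xs" "set xs \<subseteq> S" for xs
    using that subset_sumsI by (cases "xs = []") auto
  moreover have "\<one> \<in> subset_sums0 S"
    unfolding subset_sums0_def by (intro CollectI exI[of _ "[]"]) simp
  ultimately show ?thesis
    unfolding subset_sums0_def subset_sums_def by blast
qed

lemma mem_subset_sums: "x \<in> S \<Longrightarrow> S \<subseteq> carrier G \<Longrightarrow> x \<in> subset_sums G S"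
  using subset_sumsI[of "[x]" S] by auto

lemma mem_subset_sums0: "x \<in> S \<Longrightarrow> S \<subseteq> carrier G \<Longrightarrow> x \<in> subset_sums0 S"
  by (simp add: subset_sums0_eq mem_subset_sums)

lemma subset_sums_mono: "S \<subseteq> T \<Longrightarrow> subset_sums G S \<subseteq> subset_sums G T"
  unfolding subset_sums_def by blast

lemma subset_sums_closed: "S \<subseteq> carrier G \<Longrightarrow> subset_sums G S \<subseteq> carrier G"
  unfolding subset_sums_def by auto

lemma subset_sums_subgroup: "subgroup H G \<Longrightarrow> S \<subseteq> H \<Longrightarrow> subset_sums G S \<subseteq> H"
  unfolding subset_sums_def using list_prod_mem_subgroup by blast

lemma subset_sums0_subgroup: "subgroup H G \<Longrightarrow> S \<subseteq> H \<Longrightarrow> subset_sums0 S \<subseteq> H"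
  unfolding subset_sums0_def using list_prod_mem_subgroup by blast

lemma mult_mem_subset_sums2:
  "x \<in> S \<Longrightarrow> y \<in> S \<Longrightarrow> x \<noteq> y \<Longrightarrow> S \<subseteq> carrier G \<Longrightarrow> x \<otimes> y \<in> subset_sums G S"
  using subset_sumsI[of "[x, y]" S] by auto

lemma mult_mem_subset_sums3:
  assumes "x \<in> S" "y \<in> S" "z \<in> S" "x \<noteq> y" "x \<noteq> z" "y \<noteq> z" "S \<subseteq> carrier G"
  shows "x \<otimes> (y \<otimes> z) \<in> subset_sums G S"
  using subset_sumsI[of "[x, y, z]" S] assms by (auto simp: subset_iff)

lemma mult_mem_subset_sums4:
  assumes "x \<in> S" "y \<in> S" "z \<in> S" "w \<in> S" "x \<noteq> y" "x \<noteq> z" "y \<noteq> z"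
    "x \<noteq> w" "y \<noteq> w" "z \<noteq> w" "S \<subseteq> carrier G"
  shows "x \<otimes> (y \<otimes> (z \<otimes> w)) \<in> subset_sums G S"
  using subset_sumsI[of "[x, y, z, w]" S] assms by (auto simp: subset_iff)

lemma subset_sums0_mult:
  assumes "A \<inter> B = {}" "A \<subseteq> carrier G" "B \<subseteq> carrier G"
    and "p \<in> subset_sums0 A" "q \<in> subset_sums0 B"
  shows "p \<otimes> q \<in> subset_sums0 (A \<union> B)"
proof -
  obtain xs where xs: "distinct xs" "set xs \<subseteq> A" "p = list_prod G xs"
    using assms(4) unfolding subset_sums0_def by blast
  obtain ys where ys: "distinct ys" "set ys \<subseteq> B" "q = list_prod G ys"
    using assms(5) unfolding subset_sums0_def by blast
  have "list_prod G (xs @ ys) = p \<otimes> q"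
    using xs ys assms(2,3) by (simp add: list_prod_append subset_iff)
  moreover have "distinct (xs @ ys)" "set (xs @ ys) \<subseteq> A \<union> B"
    using xs ys assms(1) by auto
  ultimately show ?thesis
    unfolding subset_sums0_def by (metis (mono_tags, lifting) mem_Collect_eq)
qed

lemma subset_sums0_mult_subset_sums:
  assumes "A \<inter> B = {}" "A \<subseteq> carrier G" "B \<subseteq> carrier G"
    and "p \<in> subset_sums0 A" "q \<in> subset_sums G B"
  shows "p \<otimes> q \<in> subset_sums G (A \<union> B)" "q \<otimes> p \<in> subset_sums G (A \<union> B)"
proof -
  obtain xs where xs: "distinct xs" "set xs \<subseteq> A" "p = list_prod G xs"
    using assms(4) unfolding subset_sums0_def by blast
  obtain ys where ys: "distinct ys" "ys \<noteq> []" "set ys \<subseteq> B" "q = list_prod G ys"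
    using assms(5) unfolding subset_sums_def by blast
  have "list_prod G (xs @ ys) = p \<otimes> q" "list_prod G (ys @ xs) = q \<otimes> p"
    using xs ys assms(2,3) by (simp_all add: list_prod_append subset_iff)
  moreover have "distinct (xs @ ys)" "distinct (ys @ xs)"
    "set (xs @ ys) \<subseteq> A \<union> B" "set (ys @ xs) \<subseteq> A \<union> B" "xs @ ys \<noteq> []" "ys @ xs \<noteq> []"
    using xs ys assms(1) by auto
  ultimately show "p \<otimes> q \<in> subset_sums G (A \<union> B)" "q \<otimes> p \<in> subset_sums G (A \<union> B)"
    using subset_sumsI by metis+
qed

lemma card_Un_inv_translate:
  assumes "finite A" "finite B" "A \<subseteq> carrier G" "B \<subseteq> carrier G" "g \<in> carrier G"
    and "\<And>a b. a \<in> A \<Longrightarrow> b \<in> B \<Longrightarrow> g \<noteq> a \<otimes> b"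
  shows "card (A \<union> (\<lambda>b. g \<otimes> inv b) ` B) = card A + card B"
proof -
  have "inj_on (\<lambda>b. g \<otimes> inv b) B"
    using assms(4,5) by (intro inj_onI) (auto simp: subset_iff)
  moreover have "A \<inter> (\<lambda>b. g \<otimes> inv b) ` B = {}"
  proof (rule ccontr)
    assume "A \<inter> (\<lambda>b. g \<otimes> inv b) ` B \<noteq> {}"
    then obtain a b where "a \<in> A" "b \<in> B" "a = g \<otimes> inv b" by blast
    moreover from this have "g = a \<otimes> b"
      using assms(3-5) by (simp add: m_assoc subset_iff)
    ultimately show False using assms(6) by blast
  qed
  ultimately show ?thesis
    using assms(1,2) by (simp add: card_Un_disjoint card_image)
qed

text \<open>The prehistorical lemma of additive combinatorics, localised to a subset \<open>C\<close>.\<close>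
lemma ex_mult_eq_of_card_less:
  assumes "finite C" "A \<subseteq> C" "A \<subseteq> carrier G" "finite B" "B \<subseteq> carrier G" "g \<in> carrier G"
    and "(\<lambda>b. g \<otimes> inv b) ` B \<subseteq> C" "card C < card A + card B"
  shows "\<exists>a\<in>A. \<exists>b\<in>B. g = a \<otimes> b"
proof (rule ccontr)
  assume "\<not> ?thesis"
  then have "card (A \<union> (\<lambda>b. g \<otimes> inv b) ` B) = card A + card B"
    using assms finite_subset by (intro card_Un_inv_translate) blast+
  moreover have "card (A \<union> (\<lambda>b. g \<otimes> inv b) ` B) \<le> card C"
    using assms by (intro card_mono) auto
  ultimately show False using assms(8) by simp
qed

lemma mem_inv_translate_of_card_le:
  assumes "finite C" "A \<subseteq> C" "A \<subseteq> carrier G" "finite B" "B \<subseteq> carrier G" "g \<in> carrier G"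
    and "(\<lambda>b. g \<otimes> inv b) ` B \<subseteq> C" "card C \<le> card A + card B"
    and "\<And>a b. a \<in> A \<Longrightarrow> b \<in> B \<Longrightarrow> g \<noteq> a \<otimes> b"
    and "x \<in> C" "x \<notin> A"
  shows "\<exists>b\<in>B. x = g \<otimes> inv b"
proof -
  have "card (A \<union> (\<lambda>b. g \<otimes> inv b) ` B) = card A + card B"
    using assms finite_subset by (intro card_Un_inv_translate) blast+
  moreover have "A \<union> (\<lambda>b. g \<otimes> inv b) ` B \<subseteq> C"
    using assms(2,7) by blast
  ultimately have "A \<union> (\<lambda>b. g \<otimes> inv b) ` B = C"
    using assms(1,8) card_mono[OF assms(1)] by (metis card_subset_eq le_antisym)
  then show ?thesis using assms(10,11) by auto
qed

lemma mult_eq_one_iff: "x \<in> carrier G \<Longrightarrow> y \<in> carrier G \<Longrightarrow> x \<otimes> y = \<one> \<longleftrightarrow> y = inv x"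
  using inv_equality[OF inv_comm] by auto

lemma inv_mult_cancel_left: "x \<in> carrier G \<Longrightarrow> y \<in> carrier G \<Longrightarrow> inv x \<otimes> (x \<otimes> y) = y"
  by (simp add: m_assoc[symmetric])

lemma mult_inv_cancel_left: "x \<in> carrier G \<Longrightarrow> y \<in> carrier G \<Longrightarrow> x \<otimes> (inv x \<otimes> y) = y"
  by (simp add: m_assoc[symmetric])

lemma commute_inv:
  assumes "x \<in> carrier G" "y \<in> carrier G" "x \<otimes> y = y \<otimes> x"
  shows "x \<otimes> inv y = inv y \<otimes> x"
proof -
  have "x \<otimes> inv y = inv y \<otimes> ((y \<otimes> x) \<otimes> inv y)"
    using assms(1,2) by (simp add: m_assoc[symmetric])
  also have "\<dots> = inv y \<otimes> x"
    using assms by (metis m_assoc inv_closed r_inv r_one)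
  finally show ?thesis .
qed

lemma commute_mult:
  assumes "x \<in> carrier G" "y \<in> carrier G" "z \<in> carrier G"
    and "x \<otimes> y = y \<otimes> x" "x \<otimes> z = z \<otimes> x"
  shows "x \<otimes> (y \<otimes> z) = (y \<otimes> z) \<otimes> x"
  using assms by (metis m_assoc)

lemma commute_small_powers:
  assumes "a \<in> carrier G" "s \<in> carrier G" "a \<otimes> s = s \<otimes> a"
    and "x \<in> {\<one>, s, inv s, s \<otimes> s}"
  shows "a \<otimes> x = x \<otimes> a"
  using assms commute_inv[OF assms(1-3)] commute_mult[OF assms(1,2,2,3,3)] by auto

text \<open>Either \<open>h h\<^sup>-\<^sup>1 = 1\<close> with \<open>h \<noteq> h\<^sup>-\<^sup>1\<close>, or all elements are involutions and
  \<open>h\<^sub>1 h\<^sub>2 (h\<^sub>1 h\<^sub>2) = 1\<close>.\<close>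
lemma one_mem_subset_sums_subgroup:
  assumes H: "subgroup H G" and "finite H" "3 \<le> card H"
  shows "\<one> \<in> subset_sums G (H - {\<one>})"
proof -
  have Hc: "H - {\<one>} \<subseteq> carrier G" using subgroup.subset[OF H] by auto
  have inv_mem: "inv h \<in> H - {\<one>}" if "h \<in> H - {\<one>}" for h
    using that Hc subgroup.m_inv_closed[OF H] by (auto simp: subset_iff)
  show ?thesis
  proof (cases "\<exists>h\<in>H - {\<one>}. inv h \<noteq> h")
    case True
    then obtain h where h: "h \<in> H - {\<one>}" "inv h \<noteq> h" by blast
    then have "h \<otimes> inv h \<in> subset_sums G (H - {\<one>})"
      using mult_mem_subset_sums2[OF h(1) inv_mem[OF h(1)] _ Hc] by metis
    then show ?thesis using h Hc by auto
  next
    case False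
    then have invs: "inv h = h" if "h \<in> H - {\<one>}" for h using that by blast
    have card_H1: "card (H - {\<one>}) = card H - 1"
      using assms(2) subgroup.one_closed[OF H] by simp
    then have "card {} < card (H - {\<one>})" using assms(3) by simp
    then obtain h1 where h1: "h1 \<in> H - {\<one>}"
      using ex_not_mem_of_card_less[of "H - {\<one>}" "{}"] assms(2) by auto
    have "card {h1} < card (H - {\<one>})" using card_H1 assms(3) by simp
    then obtain h2 where h2: "h2 \<in> H - {\<one>}" "h2 \<noteq> h1"
      using ex_not_mem_of_card_less[of "H - {\<one>}" "{h1}"] assms(2) by auto
    have c: "h1 \<in> carrier G" "h2 \<in> carrier G" using h1 h2 Hc by auto
    define h3 where "h3 = h1 \<otimes> h2"
    have "h3 \<noteq> \<one>"
      unfolding h3_def using mult_eq_one_iff[OF c] invs[OF h1] h2(2) by simp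
    then have h3: "h3 \<in> H - {\<one>}"
      unfolding h3_def using h1 h2 subgroup.m_closed[OF H] by blast
    have "h1 \<otimes> (h2 \<otimes> h3) \<in> subset_sums G (H - {\<one>})"
      using h1 h2 h3 c by (intro mult_mem_subset_sums3 Hc) (auto simp: h3_def)
    moreover have "h1 \<otimes> (h2 \<otimes> h3) = h3 \<otimes> h3" using c by (simp add: m_assoc h3_def)
    moreover have "h3 \<otimes> h3 = \<one>"
      using invs[OF h3] r_inv[of h3] h3 Hc by auto
    ultimately show ?thesis by simp
  qed
qed

definition left_stabilizer :: "'a set \<Rightarrow> 'a set" where
  "left_stabilizer Y = {n \<in> carrier G. \<forall>y\<in>Y. n \<otimes> y \<in> Y}"

lemma left_stabilizer_image_eq:
  assumes "finite Y" "Y \<subseteq> carrier G" "n \<in> left_stabilizer Y"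
  shows "(\<lambda>y. n \<otimes> y) ` Y = Y"
  using assms unfolding left_stabilizer_def
  by (intro endo_inj_surj) (auto intro!: inj_onI simp: subset_iff)

lemma subgroup_left_stabilizer:
  assumes "finite Y" "Y \<subseteq> carrier G"
  shows "subgroup (left_stabilizer Y) G"
proof (rule subgroupI)
  show "left_stabilizer Y \<subseteq> carrier G" "left_stabilizer Y \<noteq> {}"
    using assms(2) unfolding left_stabilizer_def by (auto intro!: exI[of _ \<one>] simp: subset_iff)
next
  fix n assume n: "n \<in> left_stabilizer Y"
  then have nc: "n \<in> carrier G" unfolding left_stabilizer_def by auto
  have "inv n \<otimes> y \<in> Y" if "y \<in> Y" for y
  proof -
    obtain y' where "y' \<in> Y" "y = n \<otimes> y'"
      using left_stabilizer_image_eq[OF assms n] \<open>y \<in> Y\<close> by blast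
    then show ?thesis using nc assms(2) by (auto simp: inv_mult_cancel_left subset_iff)
  qed
  then show "inv n \<in> left_stabilizer Y" using nc unfolding left_stabilizer_def by auto
next
  fix m n assume "m \<in> left_stabilizer Y" "n \<in> left_stabilizer Y"
  then show "m \<otimes> n \<in> left_stabilizer Y"
    using assms(2) unfolding left_stabilizer_def by (auto simp: m_assoc subset_iff)
qed

end

locale index_two_subgroup = group G for G (structure) +
  fixes H
  assumes finite_carrier: "finite (carrier G)"
    and H_subgroup: "subgroup H G"
    and index_two: "card (rcosets H) = 2"
begin

lemma H_subset: "H \<subseteq> carrier G"
  by (rule subgroup.subset[OF H_subgroup])

lemma H_one [simp]: "\<one> \<in> H"
  by (rule subgroup.one_closed[OF H_subgroup])

lemma H_mult: "a \<in> H \<Longrightarrow> b \<in> H \<Longrightarrow> a \<otimes> b \<in> H"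
  by (rule subgroup.m_closed[OF H_subgroup])

lemma H_inv: "a \<in> H \<Longrightarrow> inv a \<in> H"
  by (rule subgroup.m_inv_closed[OF H_subgroup])

lemma H_inv_iff: "a \<in> carrier G \<Longrightarrow> inv a \<in> H \<longleftrightarrow> a \<in> H"
  using H_inv[of "inv a"] H_inv by auto

lemma finite_H: "finite H"
  using finite_subset[OF H_subset finite_carrier] .

lemma mult_notin_H:
  assumes "a \<in> H" "b \<in> carrier G" "b \<notin> H"
  shows "a \<otimes> b \<notin> H" "b \<otimes> a \<notin> H"
proof -
  have a: "a \<in> carrier G" using assms H_subset by auto
  show "a \<otimes> b \<notin> H"
  proof
    assume "a \<otimes> b \<in> H"
    then have "inv a \<otimes> (a \<otimes> b) \<in> H" by (rule H_mult[OF H_inv[OF assms(1)]])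
    then show False using assms a by (simp add: inv_mult_cancel_left)
  qed
  show "b \<otimes> a \<notin> H"
  proof
    assume "b \<otimes> a \<in> H"
    then have "(b \<otimes> a) \<otimes> inv a \<in> H" by (rule H_mult[OF _ H_inv[OF assms(1)]])
    then show False using assms a by (simp add: m_assoc)
  qed
qed

text \<open>With only two right cosets, \<open>H a\<close> and \<open>H b\<^sup>-\<^sup>1\<close> must coincide when neither is \<open>H\<close>.\<close>
lemma mult_mem_H_of_notin:
  assumes "a \<in> carrier G" "a \<notin> H" "b \<in> carrier G" "b \<notin> H"
  shows "a \<otimes> b \<in> H"
proof -
  have ib: "inv b \<in> carrier G" "inv b \<notin> H" using assms H_inv_iff by auto
  have "H #> a \<noteq> H" "H #> inv b \<noteq> H"
    using rcos_self[OF assms(1) H_subgroup] rcos_self[OF ib(1) H_subgroup] assms ib by auto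
  moreover have "H \<in> rcosets H"
    using rcosetsI[OF H_subset one_closed] coset_mult_one[OF H_subset] by simp
  moreover have "H #> a \<in> rcosets H" "H #> inv b \<in> rcosets H"
    using rcosetsI[OF H_subset] assms ib by auto
  ultimately have "H #> a = H #> inv b" using eq_of_card_eq_2[OF index_two] by blast
  then have "a \<in> H #> inv b" using rcos_self[OF assms(1) H_subgroup] by simp
  then obtain h where "h \<in> H" "a = h \<otimes> inv b" unfolding r_coset_def by blast
  moreover from this have "a \<otimes> b = h" using assms H_subset by (simp add: m_assoc subset_iff)
  ultimately show ?thesis by simp
qed

lemma ex_notin_H: "\<exists>u. u \<in> carrier G \<and> u \<notin> H"
proof (rule ccontr)
  assume "\<not> ?thesis"
  then have "H = carrier G" using H_subset by auto
  then have "rcosets H = {H}"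
    unfolding RCOSETS_def using coset_join2[OF _ H_subgroup] H_subset by auto
  then show False using index_two by simp
qed

lemma order_eq: "order G = 2 * card H"
  using lagrange[OF H_subgroup] index_two by simp

lemma card_outer_coset: "card (carrier G - H) = card H"
  using order_eq H_subset finite_H unfolding order_def by (simp add: card_Diff_subset)

lemma comm_groupI_of_commuting_outside:
  assumes u: "u \<in> carrier G" "u \<notin> H"
    and u_comm: "\<And>h. h \<in> H \<Longrightarrow> u \<otimes> h = h \<otimes> u"
    and H_comm: "\<And>h k. h \<in> H \<Longrightarrow> k \<in> H \<Longrightarrow> h \<otimes> k = k \<otimes> h"
  shows "comm_group G"
proof (rule group_comm_groupI)
  have split: "\<exists>h\<in>H. x = h \<or> x = u \<otimes> h" if "x \<in> carrier G" for x
  proof (cases "x \<in> H")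
    case False
    then have "inv u \<otimes> x \<in> H" using mult_mem_H_of_notin u that H_inv_iff by auto
    moreover have "x = u \<otimes> (inv u \<otimes> x)" using u that by (simp add: mult_inv_cancel_left)
    ultimately show ?thesis by blast
  qed auto
  have comm_gen: "x \<otimes> h = h \<otimes> x \<and> x \<otimes> u = u \<otimes> x"
    if x: "x \<in> carrier G" and h: "h \<in> H" for x h
  proof -
    obtain k where k: "k \<in> H" "x = k \<or> x = u \<otimes> k" using split[OF x] by blast
    have c: "h \<in> carrier G" "k \<in> carrier G" using k h H_subset by auto
    from k(2) show ?thesis
    proof
      assume "x = k" then show ?thesis using H_comm u_comm h k(1) by auto
    next
      assume x: "x = u \<otimes> k"
      have "h \<otimes> (u \<otimes> k) = (u \<otimes> k) \<otimes> h"
        using commute_mult[OF c(1) u(1) c(2)] u_comm[OF h] H_comm[OF h k(1)] by simp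
      moreover have "u \<otimes> (u \<otimes> k) = (u \<otimes> k) \<otimes> u"
        using commute_mult[OF u(1) u(1) c(2)] u_comm[OF k(1)] by simp
      ultimately show ?thesis using x by simp
    qed
  qed
  fix x y assume x: "x \<in> carrier G" and y: "y \<in> carrier G"
  obtain k where k: "k \<in> H" "y = k \<or> y = u \<otimes> k" using split[OF y] by blast
  then show "x \<otimes> y = y \<otimes> x"
    using comm_gen[OF x k(1)] commute_mult[OF x u(1)] k H_subset by auto
qed

lemma comm_group_of_card_le_2:
  assumes "card H \<le> 2"
  shows "comm_group G"
proof -
  obtain u where u: "u \<in> carrier G" "u \<notin> H" using ex_notin_H by blast
  have "card (H - {\<one>}) \<le> 1" using finite_H assms by simp
  then have H_cases: "h = \<one> \<or> h = k" if "h \<in> H" "k \<in> H" "k \<noteq> \<one>" for h k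
    using card_le_Suc0_iff_eq[of "H - {\<one>}"] that finite_H by auto
  have "u \<otimes> h = h \<otimes> u" if h: "h \<in> H" for h
  proof (cases "h = \<one>")
    case False
    have hc: "h \<in> carrier G" using h H_subset by auto
    have conj: "inv u \<otimes> (h \<otimes> u) \<in> H"
      using mult_mem_H_of_notin[of "inv u" "h \<otimes> u"] mult_notin_H(1)[OF h u] u hc H_inv_iff by auto
    have "inv u \<otimes> (h \<otimes> u) \<noteq> \<one>"
    proof
      assume "inv u \<otimes> (h \<otimes> u) = \<one>"
      then have "h \<otimes> u = u \<otimes> \<one>" using u hc inv_solve_left' by (metis m_closed one_closed)
      then show False using False u hc by (simp add: m_assoc)
    qed
    then have "inv u \<otimes> (h \<otimes> u) = h" using H_cases[OF conj h False] by auto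
    then have "u \<otimes> (inv u \<otimes> (h \<otimes> u)) = u \<otimes> h" by simp
    then show ?thesis using u hc by (simp add: mult_inv_cancel_left)
  qed (use u in simp)
  moreover have "h \<otimes> k = k \<otimes> h" if "h \<in> H" "k \<in> H" for h k
    using H_cases[of h k] that H_subset by (cases "k = \<one>") auto
  ultimately show ?thesis by (rule comm_groupI_of_commuting_outside[OF u])
qed

lemma H_eq_powers_of_card_3:
  assumes card_H: "card H = 3" and h: "h \<in> H" "h \<noteq> \<one>"
  shows "H = {\<one>, h, h \<otimes> h}"
proof -
  have hc: "h \<in> carrier G" using h H_subset by auto
  have "h \<otimes> h \<noteq> \<one>"
  proof
    assume hh: "h \<otimes> h = \<one>"
    have "card {\<one>, h} < card H" using card_H by (simp add: card_insert_if)
    then obtain k where k: "k \<in> H" "k \<notin> {\<one>, h}"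
      using ex_not_mem_of_card_less[of H "{\<one>, h}"] finite_H by auto
    have kc: "k \<in> carrier G" using k H_subset by auto
    have "inv h = h" using mult_eq_one_iff[OF hc hc] hh by simp
    then have "h \<otimes> k \<notin> {\<one>, h, k}" using mult_eq_one_iff[OF hc kc] h k kc hc by auto
    then have "card {\<one>, h, k, h \<otimes> k} = 4" using h k by auto
    moreover have "card {\<one>, h, k, h \<otimes> k} \<le> card H"
      using h k H_mult by (intro card_mono[OF finite_H]) auto
    ultimately show False using card_H by simp
  qed
  then have "card {\<one>, h, h \<otimes> h} = card H" using h hc card_H by auto
  moreover have "{\<one>, h, h \<otimes> h} \<subseteq> H" using h H_mult by auto
  ultimately show ?thesis using card_subset_eq[OF finite_H] by metis
qed

text \<open>Otherwise \<open>x\<^sup>2\<close> generates \<open>H\<close> and commutes with \<open>x\<close>, which makes \<open>G\<close> abelian.\<close>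
lemma square_outside_eq_one_of_card_3:
  assumes card_H: "card H = 3" and noncomm: "\<not> comm_group G"
    and x: "x \<in> carrier G" "x \<notin> H"
  shows "x \<otimes> x = \<one>"
proof (rule ccontr)
  assume ne: "x \<otimes> x \<noteq> \<one>"
  define h where "h = x \<otimes> x"
  have h: "h \<in> H" "h \<in> carrier G" "h \<noteq> \<one>"
    unfolding h_def using mult_mem_H_of_notin x ne by auto
  have H_powers: "k \<in> {\<one>, h, inv h, h \<otimes> h}" if "k \<in> H" for k
    using H_eq_powers_of_card_3[OF card_H h(1,3)] that by auto
  have "x \<otimes> h = h \<otimes> x" unfolding h_def using x by (simp add: m_assoc)
  then have "x \<otimes> k = k \<otimes> x" if "k \<in> H" for k
    using commute_small_powers[OF x(1) h(2) _ H_powers[OF that]] by simp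
  moreover have "a \<otimes> b = b \<otimes> a" if "a \<in> H" "b \<in> H" for a b
  proof -
    have "a \<otimes> h = h \<otimes> a"
      using commute_small_powers[OF h(2) h(2) refl H_powers[OF that(1)]] by simp
    then show ?thesis
      using commute_small_powers[OF _ h(2) _ H_powers[OF that(2)]] that H_subset by auto
  qed
  ultimately show False using comm_groupI_of_commuting_outside[OF x] noncomm by blast
qed

text \<open>The three involutions outside \<open>H\<close>: a product of two of them is \<open>1\<close> only if they
  coincide, and a product of all three lies outside \<open>H\<close>.\<close>
lemma one_notin_subset_sums_outer_coset:
  assumes card_H: "card H = 3" and noncomm: "\<not> comm_group G"
  shows "\<one> \<notin> subset_sums G (carrier G - H)"
proof
  assume "\<one> \<in> subset_sums G (carrier G - H)"
  then obtain xs where xs: "distinct xs" "xs \<noteq> []" "set xs \<subseteq> carrier G - H" "list_prod G xs = \<one>"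
    unfolding subset_sums_def by auto
  have "card (set xs) \<le> card (carrier G - H)" using xs(3) finite_carrier by (intro card_mono) auto
  then have len: "length xs \<le> 3" using distinct_card[OF xs(1)] card_outer_coset card_H by simp
  have inv_self: "inv a = a" if "a \<in> carrier G - H" for a
    using that square_outside_eq_one_of_card_3[OF card_H noncomm] mult_eq_one_iff by auto
  consider a where "xs = [a]" | a b where "xs = [a, b]" | a b c where "xs = [a, b, c]"
    using xs(2) len by (auto simp: length_Suc_conv numeral_3_eq_3 le_Suc_eq)
  then show False
  proof cases
    case (1 a)
    then show False using xs by auto
  next
    case (2 a b)
    then have "b = inv a" using xs mult_eq_one_iff[of a b] by auto
    then show False using inv_self 2 xs by auto
  next
    case (3 a b c)
    then have "b \<otimes> c \<in> H" using xs mult_mem_H_of_notin by auto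
    then have "a \<otimes> (b \<otimes> c) \<notin> H" using mult_notin_H(2)[of "b \<otimes> c" a] 3 xs by auto
    then show False using 3 xs by auto
  qed
qed

end

locale index_two_large_set = index_two_subgroup +
  fixes S
  assumes S_subset: "S \<subseteq> carrier G - {\<one>}" and card_H_le: "card H \<le> card S"
begin

definition "S_in = S \<inter> H"
definition "S_out = S - H"
definition "K = subset_sums0 S_in"

lemma S_carrier: "S \<subseteq> carrier G"
  using S_subset by auto

lemma finite_S: "finite S"
  using finite_subset[OF S_carrier finite_carrier] .

lemma S_in_subset_H: "S_in \<subseteq> H" and one_notin_S_in: "\<one> \<notin> S_in"
  using S_subset unfolding S_in_def by auto

lemma S_in_carrier: "S_in \<subseteq> carrier G"
  using S_in_subset_H H_subset by auto

lemma S_out_carrier: "S_out \<subseteq> carrier G" and S_out_notin_H: "y \<in> S_out \<Longrightarrow> y \<notin> H"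
  using S_subset unfolding S_out_def by auto

lemma finite_S_in: "finite S_in" and finite_S_out: "finite S_out"
  using finite_S unfolding S_in_def S_out_def by auto

lemma Un_S_in_S_out: "S_in \<union> S_out = S" and S_in_S_out_disjoint: "S_in \<inter> S_out = {}"
  unfolding S_in_def S_out_def by auto

lemma card_S_eq: "card S = card S_in + card S_out"
  using card_Un_disjoint[OF finite_S_in finite_S_out S_in_S_out_disjoint]
  by (simp only: Un_S_in_S_out)

lemma card_S_in_less: "card S_in < card H"
proof -
  have "card S_in \<le> card (H - {\<one>})"
    using S_in_subset_H one_notin_S_in finite_H by (intro card_mono) auto
  moreover have "card (H - {\<one>}) < card H" using finite_H H_one by (rule card_Diff1_less)
  ultimately show ?thesis by simp
qed

lemma K_subset_H: "K \<subseteq> H"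
  unfolding K_def using subset_sums0_subgroup[OF H_subgroup S_in_subset_H] .

lemma K_carrier: "K \<subseteq> carrier G"
  using K_subset_H H_subset by auto

lemma finite_K: "finite K"
  by (rule finite_subset[OF K_subset_H finite_H])

lemma insert_one_S_in_subset_K: "insert \<one> S_in \<subseteq> K"
  unfolding K_def using mem_subset_sums0 S_in_carrier by (auto simp: subset_sums0_eq)

lemma card_K_ge: "card S_in + 1 \<le> card K"
  using card_mono[OF finite_K insert_one_S_in_subset_K] finite_S_in one_notin_S_in by simp

lemma S_out_nonempty: "S_out \<noteq> {}"
  using card_S_eq card_H_le card_S_in_less by auto

lemma K_mult_S_out:
  assumes "k \<in> K" "y \<in> S_out"
  shows "k \<otimes> y \<in> subset_sums G S" "y \<otimes> k \<in> subset_sums G S"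
proof -
  have y: "y \<in> carrier G" using assms S_out_carrier by auto
  have "S_in \<inter> {y} = {}" using assms S_in_S_out_disjoint by auto
  then have "k \<otimes> y \<in> subset_sums G (S_in \<union> {y})" "y \<otimes> k \<in> subset_sums G (S_in \<union> {y})"
    using subset_sums0_mult_subset_sums[OF _ S_in_carrier _ _ mem_subset_sums[of y "{y}"]] assms y
    unfolding K_def by auto
  moreover have "S_in \<union> {y} \<subseteq> S" using assms Un_S_in_S_out by auto
  ultimately show "k \<otimes> y \<in> subset_sums G S" "y \<otimes> k \<in> subset_sums G S"
    using subset_sums_mono by blast+
qed

lemma S_out_mult_K_mult_S_out:
  assumes "k \<in> K" "u \<in> S_out" "v \<in> S_out" "u \<noteq> v"
  shows "u \<otimes> k \<otimes> v \<in> subset_sums G S"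
proof -
  have uv: "u \<in> carrier G" "v \<in> carrier G" using assms S_out_carrier by auto
  have "{u} \<inter> S_in = {}" using assms S_in_S_out_disjoint by auto
  then have "u \<otimes> k \<in> subset_sums0 ({u} \<union> S_in)"
    using subset_sums0_mult[OF _ _ S_in_carrier mem_subset_sums0[of u "{u}"]] assms uv
    unfolding K_def by auto
  moreover have "({u} \<union> S_in) \<inter> {v} = {}" "{u} \<union> S_in \<union> {v} \<subseteq> S"
    using assms Un_S_in_S_out S_in_S_out_disjoint by auto
  ultimately show ?thesis
    using subset_sums0_mult_subset_sums(1)[of "{u} \<union> S_in" "{v}" "u \<otimes> k" v]
      subset_sums_mono[of "{u} \<union> S_in \<union> {v}" S] mem_subset_sums[of v "{v}"] uv S_in_carrier
    by auto
qed

lemma K_mult_S_out_mult_S_out: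
  assumes "k \<in> K" "u \<in> S_out" "v \<in> S_out" "u \<noteq> v"
  shows "k \<otimes> (u \<otimes> v) \<in> subset_sums G S" "k \<otimes> u \<otimes> v \<in> subset_sums G S"
proof -
  have uv: "u \<in> carrier G" "v \<in> carrier G" using assms S_out_carrier by auto
  have "S_in \<inter> {u, v} = {}" "S_in \<union> {u, v} \<subseteq> S"
    using assms Un_S_in_S_out S_in_S_out_disjoint by auto
  moreover have "u \<otimes> v \<in> subset_sums G {u, v}"
    using mult_mem_subset_sums2[of u "{u, v}" v] uv assms by auto
  ultimately show "k \<otimes> (u \<otimes> v) \<in> subset_sums G S"
    using subset_sums0_mult_subset_sums(1)[of S_in "{u, v}" k "u \<otimes> v"]
      subset_sums_mono[of "S_in \<union> {u, v}" S] S_in_carrier assms uv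
    unfolding K_def by auto
  then show "k \<otimes> u \<otimes> v \<in> subset_sums G S"
    using assms uv K_carrier by (simp add: m_assoc subset_iff)
qed

text \<open>\<open>K\<close> and \<open>g S_out\<^sup>-\<^sup>1\<close> are too large to be disjoint inside \<open>H\<close>.\<close>
lemma outer_coset_subset_sums: "carrier G - H \<subseteq> subset_sums G S"
proof
  fix g assume g: "g \<in> carrier G - H"
  have "(\<lambda>y. g \<otimes> inv y) ` S_out \<subseteq> H"
    using mult_mem_H_of_notin g S_out_carrier S_out_notin_H H_inv_iff by auto
  moreover have "card H < card K + card S_out" using card_K_ge card_S_eq card_H_le by simp
  ultimately obtain k y where "k \<in> K" "y \<in> S_out" "g = k \<otimes> y"
    using ex_mult_eq_of_card_less[OF finite_H K_subset_H K_carrier finite_S_out S_out_carrier,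
        of g] g by auto
  then show "g \<in> subset_sums G S" using K_mult_S_out by simp
qed

text \<open>For \<open>g \<in> H\<close> fix \<open>u \<in> S_out\<close> and decompose \<open>u\<^sup>-\<^sup>1 g \<notin> H\<close> as \<open>k v\<close> with \<open>v \<in> S_out - {u}\<close>.\<close>
lemma H_subset_subset_sums_of_card_greater:
  assumes "card H < card S"
  shows "H \<subseteq> subset_sums G S"
proof
  fix g assume g: "g \<in> H"
  obtain u where u: "u \<in> S_out" using S_out_nonempty by blast
  have uc: "u \<in> carrier G" "u \<notin> H" using u S_out_carrier S_out_notin_H by auto
  have gc: "g \<in> carrier G" using g H_subset by auto
  define h where "h = inv u \<otimes> g"
  have h: "h \<in> carrier G" "h \<notin> H"
    unfolding h_def using mult_notin_H(2)[OF g, of "inv u"] uc gc H_inv_iff by auto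
  have "(\<lambda>y. h \<otimes> inv y) ` (S_out - {u}) \<subseteq> H"
    using mult_mem_H_of_notin h S_out_carrier S_out_notin_H H_inv_iff by auto
  moreover have "card H < card K + card (S_out - {u})"
    using card_K_ge card_S_eq assms u finite_S_out by (simp add: card_gt_0_iff)
  ultimately obtain k v where kv: "k \<in> K" "v \<in> S_out - {u}" "h = k \<otimes> v"
    using ex_mult_eq_of_card_less[OF finite_H K_subset_H K_carrier _ _ h(1), of "S_out - {u}"]
      finite_S_out S_out_carrier by auto
  have "g = u \<otimes> h" using uc gc by (simp add: h_def mult_inv_cancel_left)
  also have "\<dots> = u \<otimes> k \<otimes> v" using kv uc K_carrier S_out_carrier by (simp add: m_assoc subset_iff)
  finally show "g \<in> subset_sums G S" using S_out_mult_K_mult_S_out[of k u v] kv u by auto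
qed

end

locale uncovered_element = index_two_large_set +
  assumes card_S: "card S = card H" and noncomm: "\<not> comm_group G" and four_le_card_H: "4 \<le> card H"
  fixes g
  assumes g_mem_H: "g \<in> H" and g_notin: "g \<notin> subset_sums G S"
begin

lemma g_carrier: "g \<in> carrier G"
  using g_mem_H H_subset by auto

lemma card_S_in_S_out: "card S_in + card S_out = card H"
  using card_S card_S_eq by simp

lemma two_le_card_S_out: "2 \<le> card S_out"
proof (rule ccontr)
  assume "\<not> 2 \<le> card S_out"
  then have "card S_out = 1" using card_S_in_S_out card_S_in_less by linarith
  then have "card S_in = card (H - {\<one>})" using card_S_in_S_out finite_H by simp
  then have S_in_eq: "S_in = H - {\<one>}"
    using S_in_subset_H one_notin_S_in finite_H by (intro card_subset_eq) auto
  show False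
  proof (cases "g = \<one>")
    case True
    have "\<one> \<in> subset_sums G S_in"
      using one_mem_subset_sums_subgroup[OF H_subgroup finite_H] four_le_card_H S_in_eq by simp
    then show False
      using True g_notin subset_sums_mono[of S_in S] Un_S_in_S_out by blast
  next
    case False
    then have "g \<in> S" using g_mem_H S_in_eq Un_S_in_S_out by blast
    then show False using g_notin mem_subset_sums S_carrier by blast
  qed
qed

text \<open>Both translates \<open>u K\<close> and \<open>K u\<close> lie in \<open>G - H\<close> and avoid the \<open>|S_out| - 1\<close> elements
  \<open>g v\<^sup>-\<^sup>1\<close>, \<open>v \<in> S_out - {u}\<close>; this leaves room for only \<open>|S_in| + 1\<close> elements.\<close>
lemma card_translates_K_le:
  assumes u: "u \<in> S_out"
  shows "card ((\<lambda>k. u \<otimes> k) ` K \<union> (\<lambda>k. k \<otimes> u) ` K) \<le> card S_in + 1"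
proof -
  let ?X = "(\<lambda>k. u \<otimes> k) ` K \<union> (\<lambda>k. k \<otimes> u) ` K"
  have uc: "u \<in> carrier G" "u \<notin> H" using u S_out_carrier S_out_notin_H by auto
  have X: "?X \<subseteq> carrier G - H" "?X \<subseteq> carrier G"
    using mult_notin_H uc K_subset_H K_carrier by auto
  have img: "(\<lambda>y. g \<otimes> inv y) ` (S_out - {u}) \<subseteq> carrier G - H"
    using mult_notin_H(1)[OF g_mem_H] g_carrier S_out_carrier S_out_notin_H H_inv_iff by auto
  have no_prod: "g \<noteq> x \<otimes> v" if x: "x \<in> ?X" and v: "v \<in> S_out - {u}" for x v
  proof -
    obtain k where "k \<in> K" "x = u \<otimes> k \<or> x = k \<otimes> u" using x by blast
    then show ?thesis
      using S_out_mult_K_mult_S_out[of k u v] K_mult_S_out_mult_S_out(2)[of k u v] u v g_notin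
      by auto
  qed
  have "S_out - {u} \<subseteq> carrier G" using S_out_carrier by auto
  from ex_mult_eq_of_card_less[OF _ X(1,2) _ this g_carrier img] no_prod
  have "\<not> card (carrier G - H) < card ?X + card (S_out - {u})"
    using finite_carrier finite_S_out by auto
  moreover have "card (S_out - {u}) = card S_out - 1" using u finite_S_out by simp
  ultimately show ?thesis
    using card_outer_coset card_S_in_S_out two_le_card_S_out by linarith
qed

lemma K_eq: "K = insert \<one> S_in"
proof -
  obtain u where u: "u \<in> S_out" using S_out_nonempty by blast
  then have uc: "u \<in> carrier G" using S_out_carrier by auto
  have "inj_on (\<lambda>k. u \<otimes> k) K" using uc K_carrier by (intro inj_onI) (auto simp: subset_iff)
  then have "card K \<le> card ((\<lambda>k. u \<otimes> k) ` K \<union> (\<lambda>k. k \<otimes> u) ` K)"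
    using card_mono[of _ "(\<lambda>k. u \<otimes> k) ` K"] finite_K by (simp add: card_image)
  then have "card K \<le> card (insert \<one> S_in)"
    using card_translates_K_le[OF u] finite_S_in one_notin_S_in by simp
  with card_mono[OF finite_K insert_one_S_in_subset_K]
  have "card (insert \<one> S_in) = card K" by (rule le_antisym)
  then show ?thesis
    using card_subset_eq[OF finite_K insert_one_S_in_subset_K] by simp
qed

lemma K_mult_subset_mult_K:
  assumes u: "u \<in> S_out"
  shows "(\<lambda>k. k \<otimes> u) ` K \<subseteq> (\<lambda>k. u \<otimes> k) ` K"
proof -
  let ?L = "(\<lambda>k. u \<otimes> k) ` K"
  have uc: "u \<in> carrier G" using u S_out_carrier by auto
  have "inj_on (\<lambda>k. u \<otimes> k) K" using uc K_carrier by (intro inj_onI) (auto simp: subset_iff)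
  then have "card ?L = card S_in + 1"
    using K_eq finite_S_in one_notin_S_in by (simp add: card_image)
  moreover have "card (?L \<union> (\<lambda>k. k \<otimes> u) ` K) \<le> card ?L"
    using card_translates_K_le[OF u] calculation by simp
  ultimately have "?L = ?L \<union> (\<lambda>k. k \<otimes> u) ` K"
    using finite_K card_mono[of "?L \<union> (\<lambda>k. k \<otimes> u) ` K" ?L]
    by (intro card_subset_eq) auto
  then show ?thesis by blast
qed

lemma conj_mem_K:
  assumes "u \<in> S_out" "k \<in> K"
  shows "inv u \<otimes> k \<otimes> u \<in> K"
proof -
  obtain k' where k': "k' \<in> K" "k \<otimes> u = u \<otimes> k'"
    using K_mult_subset_mult_K[OF assms(1)] assms(2) by blast
  have "u \<in> carrier G" "k \<in> carrier G" "k' \<in> carrier G"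
    using assms k' S_out_carrier K_carrier by auto
  then have "inv u \<otimes> k \<otimes> u = k'" using k' by (simp add: m_assoc inv_mult_cancel_left)
  then show ?thesis using k' by simp
qed

lemma subset_sums_S_in_subset: "subset_sums G S_in \<subseteq> insert \<one> S_in"
  using K_eq unfolding K_def subset_sums0_eq by blast

definition "D = {u \<otimes> v | u v. u \<in> S_out \<and> v \<in> S_out \<and> u \<noteq> v}"

lemma D_subset_H: "D \<subseteq> H"
  unfolding D_def using mult_mem_H_of_notin S_out_carrier S_out_notin_H by auto

lemma D_carrier: "D \<subseteq> carrier G"
  using D_subset_H H_subset by auto

lemma finite_D: "finite D"
  by (rule finite_subset[OF D_subset_H finite_H])

lemma g_ne_K_mult_D: "k \<in> K \<Longrightarrow> d \<in> D \<Longrightarrow> g \<noteq> k \<otimes> d"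
  unfolding D_def using K_mult_S_out_mult_S_out(1) g_notin by blast

lemma card_K_D_le: "card K + card D \<le> card H"
proof (rule ccontr)
  assume "\<not> ?thesis"
  moreover have "(\<lambda>y. g \<otimes> inv y) ` D \<subseteq> H" using D_subset_H g_mem_H H_mult H_inv by auto
  ultimately obtain k d where "k \<in> K" "d \<in> D" "g = k \<otimes> d"
    using ex_mult_eq_of_card_less[OF finite_H K_subset_H K_carrier finite_D D_carrier g_carrier]
    by auto
  then show False using g_ne_K_mult_D by blast
qed

lemma left_translate_eq_D:
  assumes u: "u \<in> S_out"
  shows "(\<lambda>v. u \<otimes> v) ` (S_out - {u}) = D"
proof -
  have uc: "u \<in> carrier G" using u S_out_carrier by auto
  have sub: "(\<lambda>v. u \<otimes> v) ` (S_out - {u}) \<subseteq> D" unfolding D_def using u by blast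
  have "inj_on (\<lambda>v. u \<otimes> v) (S_out - {u})"
    using uc S_out_carrier by (intro inj_onI) (auto simp: subset_iff)
  then have "card ((\<lambda>v. u \<otimes> v) ` (S_out - {u})) = card S_out - 1"
    using u finite_S_out by (simp add: card_image)
  moreover have "card D \<le> card S_out - 1"
    using card_K_D_le card_K_ge card_S_in_S_out by linarith
  ultimately show ?thesis
    using card_subset_eq[OF finite_D sub] card_mono[OF finite_D sub] by simp
qed

lemma card_D: "card D = card S_out - 1"
proof -
  obtain u where u: "u \<in> S_out" using S_out_nonempty by blast
  have "inj_on (\<lambda>v. u \<otimes> v) (S_out - {u})"
    using u S_out_carrier by (intro inj_onI) (auto simp: subset_iff)
  then show ?thesis
    using left_translate_eq_D[OF u] u finite_S_out by (metis card_image card_Diff_singleton)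
qed

lemma right_translate_eq_D:
  assumes u: "u \<in> S_out"
  shows "(\<lambda>v. v \<otimes> u) ` (S_out - {u}) = D"
proof -
  have uc: "u \<in> carrier G" using u S_out_carrier by auto
  have sub: "(\<lambda>v. v \<otimes> u) ` (S_out - {u}) \<subseteq> D" unfolding D_def using u by blast
  have "inj_on (\<lambda>v. v \<otimes> u) (S_out - {u})"
    using uc S_out_carrier by (intro inj_onI) (auto simp: subset_iff)
  then have "card ((\<lambda>v. v \<otimes> u) ` (S_out - {u})) = card D"
    using u finite_S_out card_D by (simp add: card_image)
  then show ?thesis using card_subset_eq[OF finite_D sub] by simp
qed

text \<open>\<open>K\<close> and \<open>g D\<^sup>-\<^sup>1\<close> are disjoint and together fill \<open>H\<close>.\<close>
lemma mem_H_minus_K: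
  assumes "h \<in> H" "h \<notin> K"
  shows "\<exists>d\<in>D. h = g \<otimes> inv d"
proof -
  have "(\<lambda>y. g \<otimes> inv y) ` D \<subseteq> H" using D_subset_H g_mem_H H_mult H_inv by auto
  moreover have "card H \<le> card K + card D"
    using card_D card_K_ge card_S_in_S_out two_le_card_S_out by linarith
  ultimately show ?thesis
    using mem_inv_translate_of_card_le[OF finite_H K_subset_H K_carrier finite_D D_carrier
        g_carrier _ _ _ assms] g_ne_K_mult_D by blast
qed

lemma S_in_mult_mem_K: "s \<in> S_in \<Longrightarrow> t \<in> S_in \<Longrightarrow> s \<noteq> t \<Longrightarrow> s \<otimes> t \<in> K"
  using mult_mem_subset_sums2[OF _ _ _ S_in_carrier] subset_sums_S_in_subset K_eq by blast

lemma square_notin_D: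
  assumes x: "x \<in> S_out"
  shows "x \<otimes> x \<notin> D"
proof
  assume "x \<otimes> x \<in> D"
  then obtain v where "v \<in> S_out - {x}" "x \<otimes> x = x \<otimes> v"
    using left_translate_eq_D[OF x] by auto
  then show False using x S_out_carrier by (auto simp: subset_iff)
qed

end

locale uncovered_two_outer = uncovered_element +
  fixes u v
  assumes S_out_eq: "S_out = {u, v}" and u_ne_v: "u \<noteq> v"
begin

definition "z = g \<otimes> inv (u \<otimes> v)"

lemma u_v: "u \<in> S_out" "v \<in> S_out" "u \<in> carrier G" "v \<in> carrier G" "u \<notin> H" "v \<notin> H"
  using S_out_eq S_out_carrier S_out_notin_H by auto

lemma D_eq: "D = {u \<otimes> v}"
  using left_translate_eq_D[OF u_v(1)] S_out_eq u_ne_v by auto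

lemma z_mem_H: "z \<in> H" and z_carrier: "z \<in> carrier G"
  unfolding z_def using g_mem_H u_v mult_mem_H_of_notin H_mult H_inv H_subset by auto

lemma z_mult: "z \<otimes> (u \<otimes> v) = g"
  unfolding z_def using g_carrier u_v by (simp add: m_assoc)

lemma z_notin_K: "z \<notin> K"
  using g_ne_K_mult_D[of z "u \<otimes> v"] z_mult D_eq by auto

lemma H_eq_insert_z_K: "h \<in> H \<Longrightarrow> h \<in> K \<or> h = z"
  using mem_H_minus_K D_eq unfolding z_def by auto

lemma square_eq_z:
  assumes s: "s \<in> S_in"
  shows "s \<otimes> s = z"
proof -
  have sc: "s \<in> carrier G" "s \<in> H" "s \<noteq> \<one>" using s S_in_carrier S_in_subset_H one_notin_S_in by auto
  define w where "w = inv s \<otimes> z"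
  have w: "w \<in> H" "s \<otimes> w = z"
    unfolding w_def using sc z_mem_H z_carrier H_mult H_inv by (auto simp: mult_inv_cancel_left)
  have "w \<noteq> z"
  proof
    assume "w = z"
    then have "inv s \<otimes> z = \<one> \<otimes> z" using z_carrier by (simp add: w_def)
    then have "inv (inv s) = inv \<one>" using sc z_carrier by simp
    then show False using sc by simp
  qed
  then have "w \<in> K" using H_eq_insert_z_K w by blast
  moreover have "w \<noteq> \<one>" using w sc z_notin_K s insert_one_S_in_subset_K by auto
  ultimately have "w \<in> S_in" using K_eq by auto
  then show ?thesis using S_in_mult_mem_K[OF s] w z_notin_K by fastforce
qed

text \<open>If \<open>u\<^sup>-\<^sup>1 s u = t \<noteq> s\<close>, then the product \<open>s u t v\<close> would equal \<open>s\<^sup>2 (u v) = g\<close>.\<close>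
lemma u_commute_S_in:
  assumes s: "s \<in> S_in"
  shows "u \<otimes> s = s \<otimes> u"
proof (rule ccontr)
  assume ne: "u \<otimes> s \<noteq> s \<otimes> u"
  have sc: "s \<in> carrier G" "s \<noteq> \<one>" using s S_in_carrier one_notin_S_in by auto
  define t where "t = inv u \<otimes> s \<otimes> u"
  have "t \<in> K" unfolding t_def using conj_mem_K[OF u_v(1)] s insert_one_S_in_subset_K by auto
  have tc: "t \<in> carrier G" using \<open>t \<in> K\<close> K_carrier by auto
  have ut: "u \<otimes> t = s \<otimes> u" unfolding t_def using u_v sc by (simp add: m_assoc mult_inv_cancel_left)
  have "t \<noteq> \<one>" using ut u_v sc by auto
  then have t: "t \<in> S_in" "t \<noteq> s" using \<open>t \<in> K\<close> K_eq ut ne by auto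
  have "s \<otimes> (u \<otimes> (t \<otimes> v)) \<in> subset_sums G S"
    using s t u_v u_ne_v S_in_S_out_disjoint Un_S_in_S_out S_carrier
    by (intro mult_mem_subset_sums4) auto
  moreover have "s \<otimes> (u \<otimes> (t \<otimes> v)) = (s \<otimes> s) \<otimes> (u \<otimes> v)"
    using ut u_v tc sc by (simp add: m_assoc[symmetric])
  ultimately show False using square_eq_z[OF s] z_mult g_notin by simp
qed

lemma S_in_eq_inv:
  assumes st: "s \<in> S_in" "t \<in> S_in" "t \<noteq> s"
  shows "t = inv s"
proof (rule ccontr)
  assume nt: "t \<noteq> inv s"
  have sc: "s \<in> carrier G" "t \<in> carrier G" using st S_in_carrier by auto
  define w where "w = s \<otimes> t"
  have "w \<in> K" unfolding w_def using S_in_mult_mem_K st by auto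
  moreover have "w \<noteq> \<one>" unfolding w_def using nt mult_eq_one_iff[OF sc] by auto
  ultimately have w: "w \<in> S_in" using K_eq by auto
  have "w \<noteq> s" "w \<noteq> t" unfolding w_def using sc st one_notin_S_in by auto
  then have "s \<otimes> (t \<otimes> w) \<in> subset_sums G S_in"
    using st w by (intro mult_mem_subset_sums3 S_in_carrier) auto
  moreover have "s \<otimes> (t \<otimes> w) = z" using square_eq_z[OF w] sc unfolding w_def by (simp add: m_assoc)
  ultimately show False using subset_sums_S_in_subset K_eq z_notin_K by auto
qed

text \<open>Every element of \<open>H\<close> lies in \<open>K \<union> {z}\<close> and is therefore a power of any \<open>s \<in> S_in\<close>,
  an element commuting with \<open>u\<close>.\<close>
lemma two_outer_impossible: False
proof -
  have "S_in \<noteq> {}" using card_S_in_S_out S_out_eq u_ne_v four_le_card_H by auto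
  then obtain s where s: "s \<in> S_in" by blast
  have sc: "s \<in> carrier G" using s S_in_carrier by auto
  have H_powers: "h \<in> {\<one>, s, inv s, s \<otimes> s}" if "h \<in> H" for h
    using H_eq_insert_z_K[OF that] K_eq S_in_eq_inv[OF s] square_eq_z[OF s] by auto
  have "u \<otimes> h = h \<otimes> u" if "h \<in> H" for h
    using commute_small_powers[OF u_v(3) sc u_commute_S_in[OF s] H_powers[OF that]] .
  moreover have "h \<otimes> k = k \<otimes> h" if "h \<in> H" "k \<in> H" for h k
  proof -
    have "h \<otimes> s = s \<otimes> h" using commute_small_powers[OF sc sc _ H_powers[OF that(1)]] by simp
    then show ?thesis
      using commute_small_powers[OF _ sc _ H_powers[OF that(2)]] that H_subset by auto
  qed
  ultimately show False
    using comm_groupI_of_commuting_outside[OF u_v(3,5)] noncomm by blast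
qed

end

locale uncovered_empty_inner = uncovered_element +
  fixes u
  assumes S_in_empty: "S_in = {}" and u_mem: "u \<in> S_out"
begin

definition "c = u \<otimes> u"

lemma u_carrier: "u \<in> carrier G" and u_notin_H: "u \<notin> H"
  using u_mem S_out_carrier S_out_notin_H by auto

lemma c_mem_H: "c \<in> H" and c_carrier: "c \<in> carrier G"
  unfolding c_def using mult_mem_H_of_notin u_carrier u_notin_H by auto

lemma S_out_eq: "S_out = carrier G - H"
  using S_out_carrier S_out_notin_H card_S_in_S_out card_outer_coset S_in_empty finite_carrier
  by (intro card_subset_eq) auto

lemma D_eq: "x \<in> S_out \<Longrightarrow> D = H - {x \<otimes> x}"
  using square_notin_D D_subset_H card_D card_S_in_S_out S_in_empty finite_H
    mult_mem_H_of_notin S_out_carrier S_out_notin_H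
  by (intro card_subset_eq) auto

lemma square_eq_c: "x \<in> S_out \<Longrightarrow> x \<otimes> x = c"
  using D_eq[of x] D_eq[OF u_mem] mult_mem_H_of_notin S_out_carrier S_out_notin_H
  unfolding c_def by blast

lemma g_eq_c: "g = c"
  using g_ne_K_mult_D[of \<one> g] K_eq S_in_empty D_eq[OF u_mem] g_mem_H g_carrier
  unfolding c_def by auto

lemma mult_u_eq:
  assumes h: "h \<in> H"
  shows "h \<otimes> u = u \<otimes> inv h"
proof -
  have hc: "h \<in> carrier G" using h H_subset by auto
  have "u \<otimes> h \<in> S_out" using S_out_eq mult_notin_H(2)[OF h u_carrier u_notin_H] hc u_carrier by auto
  then have "(u \<otimes> h) \<otimes> (u \<otimes> h) = u \<otimes> u" using square_eq_c unfolding c_def by blast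
  then have "u \<otimes> (h \<otimes> u \<otimes> h) = u \<otimes> \<one> \<otimes> u" using hc u_carrier by (simp add: m_assoc)
  then have "h \<otimes> u \<otimes> h = u" using hc u_carrier by (simp add: m_assoc)
  then have "h \<otimes> u \<otimes> h \<otimes> inv h = u \<otimes> inv h" by simp
  then show ?thesis using hc u_carrier by (simp add: m_assoc)
qed

lemma H_commute:
  assumes "h \<in> H" "k \<in> H"
  shows "h \<otimes> k = k \<otimes> h"
proof -
  have c: "h \<in> carrier G" "k \<in> carrier G" using assms H_subset by auto
  have "u \<otimes> inv (h \<otimes> k) = h \<otimes> (k \<otimes> u)"
    using mult_u_eq[OF H_mult[OF assms]] c u_carrier by (simp add: m_assoc)
  also have "\<dots> = (h \<otimes> u) \<otimes> inv k"
    using mult_u_eq[OF assms(2)] c u_carrier by (simp add: m_assoc)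
  also have "\<dots> = u \<otimes> (inv h \<otimes> inv k)"
    using mult_u_eq[OF assms(1)] c u_carrier by (simp add: m_assoc)
  finally have "u \<otimes> inv (h \<otimes> k) = u \<otimes> (inv h \<otimes> inv k)" .
  then have "inv (h \<otimes> k) = inv (k \<otimes> h)" using c u_carrier by (simp add: inv_mult_group)
  then show ?thesis using c by (metis inv_inv m_closed)
qed

lemma c_inv: "inv c = c" and c_square: "c \<otimes> c = \<one>"
proof -
  have "u \<otimes> inv c = u \<otimes> c"
    using mult_u_eq[OF c_mem_H] unfolding c_def using u_carrier by (simp add: m_assoc)
  then show "inv c = c" using c_carrier u_carrier by simp
  then show "c \<otimes> c = \<one>" using c_carrier r_inv by metis
qed

lemma ex_square_ne_one: "\<exists>h\<in>H. h \<otimes> h \<noteq> \<one>"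
proof (rule ccontr)
  assume squares: "\<not> ?thesis"
  have "u \<otimes> h = h \<otimes> u" if h: "h \<in> H" for h
  proof -
    have "inv h = h" using squares mult_eq_one_iff[of h h] h H_subset by auto
    then show ?thesis using mult_u_eq[OF h] by simp
  qed
  then show False
    using comm_groupI_of_commuting_outside[OF u_carrier u_notin_H] H_commute noncomm by blast
qed

lemma ex_square_root_c:
  assumes card_H: "card H = 4" and c1: "c \<noteq> \<one>"
  shows "\<exists>x\<in>H. x \<otimes> x = c"
proof (rule ccontr)
  assume no_root: "\<not> ?thesis"
  obtain h where h: "h \<in> H" "h \<otimes> h \<noteq> \<one>" using ex_square_ne_one by blast
  have hc: "h \<in> carrier G" "h \<noteq> \<one>" "h \<noteq> c" using h H_subset c_square by auto
  have "h \<otimes> h \<noteq> c" using no_root h by blast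
  then have "card {\<one>, c, h, h \<otimes> h} = card H"
    using c1 hc h card_H by simp
  moreover have "{\<one>, c, h, h \<otimes> h} \<subseteq> H" using h c_mem_H H_mult by auto
  ultimately have H_eq: "{\<one>, c, h, h \<otimes> h} = H"
    using card_subset_eq[OF finite_H] by blast
  have "c \<otimes> h \<in> H" using c_mem_H h H_mult by auto
  moreover have "c \<otimes> h \<noteq> \<one>" using mult_eq_one_iff[OF c_carrier hc(1)] c_inv hc by simp
  moreover have "c \<otimes> h \<noteq> c" "c \<otimes> h \<noteq> h" "c \<otimes> h \<noteq> h \<otimes> h"
    using hc c_carrier c1 by auto
  ultimately show False using H_eq by auto
qed

text \<open>The values of \<open>y\<close> for which \<open>1, x, y\<close> and \<open>c y x\<^sup>-\<^sup>1\<close> fail to be distinct.\<close>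
definition "blocked x = {\<one>, x, c \<otimes> x, c \<otimes> (x \<otimes> x)}"

lemma ex_card_blocked_less: "\<exists>x\<in>H. x \<noteq> \<one> \<and> x \<noteq> c \<and> card (blocked x) < card H"
proof -
  obtain h where h: "h \<in> H" "h \<otimes> h \<noteq> \<one>" using ex_square_ne_one by blast
  have hc: "h \<in> carrier G" "h \<noteq> \<one>" "h \<noteq> c" using h H_subset c_square by auto
  show ?thesis
  proof (cases "5 \<le> card H")
    case True
    have "card (blocked h) \<le> 4" unfolding blocked_def by (simp add: card_insert_if)
    then show ?thesis using hc h True by force
  next
    case False
    then have card_H: "card H = 4" using four_le_card_H by simp
    show ?thesis
    proof (cases "c = \<one>")
      case True
      then have "blocked h = {\<one>, h, h \<otimes> h}" unfolding blocked_def using hc by auto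
      then have "card (blocked h) \<le> 3" by (simp add: card_insert_if)
      then show ?thesis using hc h card_H by force
    next
      case False
      then obtain x where x: "x \<in> H" "x \<otimes> x = c" using ex_square_root_c card_H by blast
      then have "x \<noteq> \<one>" "x \<noteq> c" using False c_square by auto
      moreover have "blocked x = {\<one>, x, c \<otimes> x}" unfolding blocked_def using x c_square by auto
      then have "card (blocked x) \<le> 3" by (simp add: card_insert_if)
      ultimately show ?thesis using x card_H by force
    qed
  qed
qed

lemma c_mult_inv_distinct:
  assumes x: "x \<in> H" "x \<noteq> c" and y: "y \<in> H" "y \<notin> blocked x"
  shows "c \<otimes> y \<otimes> inv x \<notin> {\<one>, x, y}"
proof -
  have xy: "x \<in> carrier G" "y \<in> carrier G" using x y H_subset by auto
  have y_eq: "y = c \<otimes> (t \<otimes> x)" if "c \<otimes> y \<otimes> inv x = t" "t \<in> carrier G" for t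
  proof -
    have "c \<otimes> y = t \<otimes> x" using that xy c_carrier by (simp add: inv_solve_right')
    then have "(c \<otimes> c) \<otimes> y = c \<otimes> (t \<otimes> x)" using xy c_carrier by (simp add: m_assoc)
    then show ?thesis using c_square xy by simp
  qed
  have "c \<otimes> y \<otimes> inv x \<noteq> y"
  proof
    assume "c \<otimes> y \<otimes> inv x = y"
    then have "y \<otimes> \<one> = (c \<otimes> y) \<otimes> x"
      using y_eq[of y] xy c_carrier by (simp add: m_assoc)
    also have "\<dots> = y \<otimes> (c \<otimes> x)"
      using H_commute[OF y(1) c_mem_H] xy c_carrier by (simp add: m_assoc[symmetric])
    finally have "x = inv c" using xy c_carrier mult_eq_one_iff[of c x] by simp
    then show False using c_inv x by simp
  qed
  then show ?thesis using y_eq[of \<one>] y_eq[of x] y xy unfolding blocked_def by auto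
qed

lemma mult_u_mult_u:
  assumes "a \<in> H" "b \<in> H"
  shows "(u \<otimes> a) \<otimes> (u \<otimes> b) = c \<otimes> (inv a \<otimes> b)"
proof -
  have ab: "a \<in> carrier G" "b \<in> carrier G" using assms H_subset by auto
  have "(u \<otimes> a) \<otimes> (u \<otimes> b) = u \<otimes> ((a \<otimes> u) \<otimes> b)" using ab u_carrier by (simp add: m_assoc)
  also have "\<dots> = c \<otimes> (inv a \<otimes> b)"
    unfolding mult_u_eq[OF assms(1)] c_def using ab u_carrier by (simp add: m_assoc)
  finally show ?thesis .
qed

text \<open>With \<open>w = c y x\<^sup>-\<^sup>1\<close> the four distinct elements \<open>u, u x, u y, u w\<close> of \<open>S\<close> multiply to
  \<open>u (u x) x\<^sup>-\<^sup>1 = c = g\<close>.\<close>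
lemma empty_inner_impossible: False
proof -
  obtain x where x: "x \<in> H" "x \<noteq> \<one>" "x \<noteq> c" and card_blocked: "card (blocked x) < card H"
    using ex_card_blocked_less by blast
  obtain y where y: "y \<in> H" "y \<notin> blocked x"
    using ex_not_mem_of_card_less[OF finite_H _ card_blocked] unfolding blocked_def by auto
  have xy: "x \<in> carrier G" "y \<in> carrier G" using x y H_subset by auto
  define w where "w = c \<otimes> y \<otimes> inv x"
  have w: "w \<in> H" "w \<in> carrier G" unfolding w_def using x y c_mem_H H_mult H_inv H_subset by auto
  have "inv y \<otimes> w = c \<otimes> inv x"
    unfolding w_def using H_commute[OF c_mem_H y(1)] xy c_carrier by (simp add: m_assoc[symmetric])
  then have "(u \<otimes> y) \<otimes> (u \<otimes> w) = inv x"
    using mult_u_mult_u[OF y(1) w(1)] c_square xy c_carrier by (simp add: m_assoc[symmetric])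
  then have prod_eq: "u \<otimes> ((u \<otimes> x) \<otimes> ((u \<otimes> y) \<otimes> (u \<otimes> w))) = g"
    using g_eq_c xy u_carrier by (simp add: m_assoc c_def)
  have "w \<noteq> \<one>" "w \<noteq> x" "w \<noteq> y" "y \<noteq> \<one>" "y \<noteq> x"
    unfolding w_def using c_mult_inv_distinct[OF x(1,3) y] y(2) by (auto simp: blocked_def)
  then have "u \<otimes> ((u \<otimes> x) \<otimes> ((u \<otimes> y) \<otimes> (u \<otimes> w))) \<in> subset_sums G S"
    using x y w xy u_carrier S_out_eq Un_S_in_S_out S_in_empty mult_notin_H(2) u_notin_H
    by (intro mult_mem_subset_sums4 S_carrier) auto
  then show False using prod_eq g_notin by simp
qed

end

locale uncovered_large_outer = uncovered_element +
  fixes u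
  assumes three_le_card_S_out: "3 \<le> card S_out" and S_in_nonempty: "S_in \<noteq> {}"
    and u_mem: "u \<in> S_out"
begin

definition "c = u \<otimes> u"

lemma u_carrier: "u \<in> carrier G"
  using u_mem S_out_carrier by auto

lemma inv_mult_D_mem:
  assumes "d \<in> D" "x \<in> S_out"
  shows "inv x \<otimes> d \<in> S_out"
proof -
  obtain v where "v \<in> S_out" "d = x \<otimes> v" using left_translate_eq_D[OF assms(2)] assms(1) by auto
  then show ?thesis using assms(2) S_out_carrier by (auto simp: inv_mult_cancel_left subset_iff)
qed

lemma D_mult_inv_mem:
  assumes "d \<in> D" "x \<in> S_out"
  shows "d \<otimes> inv x \<in> S_out"
proof -
  obtain v where "v \<in> S_out" "d = v \<otimes> x" using right_translate_eq_D[OF assms(2)] assms(1) by auto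
  then show ?thesis using assms(2) S_out_carrier by (auto simp: m_assoc subset_iff)
qed

lemma ex_inv_mult_D:
  assumes "d \<in> D" "y \<in> S_out"
  shows "\<exists>x\<in>S_out. y = inv x \<otimes> d"
proof -
  have "(\<lambda>x. inv x \<otimes> d) ` S_out = S_out"
    using inv_mult_D_mem[OF assms(1)] assms(1) D_carrier S_out_carrier finite_S_out
    by (intro endo_inj_surj) (auto intro!: inj_onI simp: subset_iff)
  then show ?thesis using assms(2) by auto
qed

lemma ex_D_mult_inv:
  assumes "d \<in> D" "y \<in> S_out"
  shows "\<exists>x\<in>S_out. y = d \<otimes> inv x"
proof -
  have "(\<lambda>x. d \<otimes> inv x) ` S_out = S_out"
    using D_mult_inv_mem[OF assms(1)] assms(1) D_carrier S_out_carrier finite_S_out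
    by (intro endo_inj_surj) (auto intro!: inj_onI simp: subset_iff)
  then show ?thesis using assms(2) by auto
qed

definition "N = left_stabilizer S_out"

lemma N_subgroup: "subgroup N G"
  unfolding N_def using finite_S_out S_out_carrier by (rule subgroup_left_stabilizer)

lemma N_carrier: "n \<in> N \<Longrightarrow> n \<in> carrier G"
  using subgroup.mem_carrier[OF N_subgroup] .

lemma N_mult_S_out: "n \<in> N \<Longrightarrow> y \<in> S_out \<Longrightarrow> n \<otimes> y \<in> S_out"
  unfolding N_def left_stabilizer_def by auto

lemma N_subset_H: "N \<subseteq> H"
proof
  fix n assume n: "n \<in> N"
  obtain u where u: "u \<in> S_out" using S_out_nonempty by blast
  have "n \<otimes> u \<in> carrier G" "n \<otimes> u \<notin> H" "inv u \<in> carrier G" "inv u \<notin> H"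
    using N_mult_S_out[OF n u] u S_out_carrier S_out_notin_H H_inv_iff by auto
  then have "(n \<otimes> u) \<otimes> inv u \<in> H" by (rule mult_mem_H_of_notin)
  then show "n \<in> H" using N_carrier[OF n] u S_out_carrier by (auto simp: m_assoc)
qed

lemma finite_N: "finite N"
  using finite_subset[OF N_subset_H finite_H] .

lemma D_mult_inv_D_mem_N:
  assumes d: "d \<in> D" "d' \<in> D"
  shows "d \<otimes> inv d' \<in> N"
proof -
  have dc: "d \<in> carrier G" "d' \<in> carrier G" using d D_carrier by auto
  have "d \<otimes> inv d' \<otimes> y \<in> S_out" if y: "y \<in> S_out" for y
  proof -
    obtain x where x: "x \<in> S_out" "y = d' \<otimes> inv x" using ex_D_mult_inv[OF d(2) y] by blast
    then have "d \<otimes> inv d' \<otimes> y = d \<otimes> inv x"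
      using dc S_out_carrier by (simp add: m_assoc inv_mult_cancel_left subset_iff)
    then show ?thesis using D_mult_inv_mem[OF d(1) x(1)] by simp
  qed
  then show ?thesis using dc unfolding N_def left_stabilizer_def by auto
qed

lemma card_N_ge: "card S_out - 1 \<le> card N"
proof -
  obtain d where d: "d \<in> D" using card_D two_le_card_S_out by fastforce
  have "inj_on (\<lambda>x. x \<otimes> inv d) D"
    using d D_carrier by (intro inj_onI) (auto simp: subset_iff)
  moreover have "(\<lambda>x. x \<otimes> inv d) ` D \<subseteq> N" using D_mult_inv_D_mem_N d by auto
  ultimately show ?thesis using card_D card_mono[OF finite_N] by (metis card_image)
qed

lemma card_N_le: "card N \<le> card S_out"
proof -
  obtain u where u: "u \<in> S_out" using S_out_nonempty by blast
  have "inj_on (\<lambda>n. n \<otimes> u) N"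
    using u S_out_carrier N_carrier by (intro inj_onI) (auto simp: subset_iff)
  moreover have "(\<lambda>n. n \<otimes> u) ` N \<subseteq> S_out" using N_mult_S_out u by auto
  ultimately show ?thesis using card_mono[OF finite_S_out] by (metis card_image)
qed

text \<open>\<open>S_out\<close> is a union of right cosets of \<open>N\<close>, and \<open>|S_out| - 1 \<le> |N|\<close> leaves room for only one.\<close>
lemma card_N: "card N = card S_out"
proof (rule ccontr)
  assume "card N \<noteq> card S_out"
  then have card_N: "card N = card S_out - 1" using card_N_ge card_N_le by linarith
  let ?A = "(\<lambda>n. n \<otimes> u) ` N"
  have inj: "inj_on (\<lambda>n. n \<otimes> y) N" if "y \<in> S_out" for y
    using that S_out_carrier N_carrier by (intro inj_onI) (auto simp: subset_iff)
  have sub: "(\<lambda>n. n \<otimes> y) ` N \<subseteq> S_out" if "y \<in> S_out" for y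
    using N_mult_S_out that by auto
  have "card ?A < card S_out" using card_image[OF inj[OF u_mem]] card_N three_le_card_S_out by simp
  then obtain y where y: "y \<in> S_out" "y \<notin> ?A"
    using ex_not_mem_of_card_less[OF finite_S_out] finite_N by blast
  let ?B = "(\<lambda>n. n \<otimes> y) ` N"
  have "?A \<inter> ?B = {}"
  proof (rule ccontr)
    assume "?A \<inter> ?B \<noteq> {}"
    then obtain m n where mn: "m \<in> N" "n \<in> N" "m \<otimes> u = n \<otimes> y" by blast
    then have "y = (inv n \<otimes> m) \<otimes> u"
      using N_carrier y u_carrier S_out_carrier by (simp add: m_assoc inv_mult_cancel_left subset_iff)
    moreover have "inv n \<otimes> m \<in> N"
      using mn subgroup.m_closed[OF N_subgroup] subgroup.m_inv_closed[OF N_subgroup] by blast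
    ultimately show False using y by blast
  qed
  then have "card (?A \<union> ?B) = card N + card N"
    using card_Un_disjoint[of ?A ?B] finite_N card_image[OF inj[OF u_mem]] card_image[OF inj[OF y(1)]]
    by simp
  moreover have "card (?A \<union> ?B) \<le> card S_out"
    using card_mono[OF finite_S_out] sub[OF u_mem] sub[OF y(1)] by simp
  ultimately show False using card_N three_le_card_S_out by linarith
qed

lemma N_mult_eq_S_out:
  assumes y: "y \<in> S_out"
  shows "(\<lambda>n. n \<otimes> y) ` N = S_out"
proof -
  have "inj_on (\<lambda>n. n \<otimes> y) N"
    using y S_out_carrier N_carrier by (intro inj_onI) (auto simp: subset_iff)
  then have "card ((\<lambda>n. n \<otimes> y) ` N) = card S_out" using card_N by (simp add: card_image)
  moreover have "(\<lambda>n. n \<otimes> y) ` N \<subseteq> S_out" using N_mult_S_out y by auto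
  ultimately show ?thesis using card_subset_eq[OF finite_S_out] by blast
qed

lemma S_out_mult_S_out:
  assumes xy: "x \<in> S_out" "y \<in> S_out" and d: "d \<in> D"
  shows "x \<otimes> y \<in> (\<lambda>n. n \<otimes> d) ` N"
proof -
  obtain x' where x': "x' \<in> S_out" "y = inv x' \<otimes> d" using ex_inv_mult_D[OF d xy(2)] by blast
  obtain m where m: "m \<in> N" "x = m \<otimes> u" using N_mult_eq_S_out[OF u_mem] xy(1) by blast
  obtain n where n: "n \<in> N" "x' = n \<otimes> u" using N_mult_eq_S_out[OF u_mem] x'(1) by blast
  have c: "m \<in> carrier G" "n \<in> carrier G" "d \<in> carrier G"
    using m n d N_carrier D_carrier by auto
  have "x \<otimes> y = (m \<otimes> inv n) \<otimes> d"
    using x' m n c u_carrier by (simp add: m_assoc inv_mult_group inv_mult_cancel_left mult_inv_cancel_left)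
  moreover have "m \<otimes> inv n \<in> N"
    using m n subgroup.m_closed[OF N_subgroup] subgroup.m_inv_closed[OF N_subgroup] by blast
  ultimately show ?thesis by blast
qed

text \<open>For \<open>d \<in> D\<close> the coset \<open>N d\<close> has \<open>|S_out|\<close> elements and contains \<open>D\<close> together with
  every square \<open>x\<^sup>2\<close>, \<open>x \<in> S_out\<close>, none of which lies in \<open>D\<close>.\<close>
lemma square_eq_c:
  assumes x: "x \<in> S_out"
  shows "x \<otimes> x = c"
proof (rule ccontr)
  assume ne: "x \<otimes> x \<noteq> c"
  obtain d where d: "d \<in> D" using card_D three_le_card_S_out by fastforce
  have "insert (x \<otimes> x) (insert c D) \<subseteq> (\<lambda>n. n \<otimes> d) ` N"
    using S_out_mult_S_out[OF _ _ d] x u_mem unfolding c_def D_def by auto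
  moreover have "card (insert (x \<otimes> x) (insert c D)) = card D + 2"
    using ne square_notin_D[OF x] square_notin_D[OF u_mem] finite_D unfolding c_def by simp
  ultimately have "card D + 2 \<le> card ((\<lambda>n. n \<otimes> d) ` N)"
    using card_mono[of "(\<lambda>n. n \<otimes> d) ` N"] finite_N by (metis finite_imageI)
  also have "\<dots> \<le> card S_out" using card_image_le[OF finite_N] card_N by metis
  finally show False using card_D three_le_card_S_out by linarith
qed

lemma N_mult_c_eq: "(\<lambda>n. n \<otimes> c) ` N = insert c D"
proof -
  have c: "c \<in> carrier G" "c \<notin> D" unfolding c_def using u_carrier square_notin_D[OF u_mem] by auto
  have inj: "inj_on (\<lambda>n. n \<otimes> a) N" if "a \<in> carrier G" for a
    using that N_carrier by (intro inj_onI) auto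
  have card_cD: "card (insert c D) = card N" using c finite_D card_D card_N three_le_card_S_out by simp
  obtain d where d: "d \<in> D" using card_D three_le_card_S_out by fastforce
  have "insert c D \<subseteq> (\<lambda>n. n \<otimes> d) ` N"
    using S_out_mult_S_out[OF _ _ d] u_mem unfolding c_def D_def by auto
  then have Nd: "(\<lambda>n. n \<otimes> d) ` N = insert c D"
    using card_cD card_image[OF inj] d D_carrier finite_N
    by (intro card_subset_eq[symmetric]) auto
  then obtain m where m: "m \<in> N" "c = m \<otimes> d" by auto
  have "n \<otimes> c \<in> insert c D" if "n \<in> N" for n
  proof -
    have "n \<otimes> c = (n \<otimes> m) \<otimes> d" using m that N_carrier d D_carrier by (auto simp: m_assoc)
    then show ?thesis using Nd subgroup.m_closed[OF N_subgroup that m(1)] by auto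
  qed
  then show ?thesis
    using card_cD card_image[OF inj[OF c(1)]] finite_D by (intro card_subset_eq) auto
qed

lemma D_eq: "D = (\<lambda>n. n \<otimes> c) ` (N - {\<one>})"
proof -
  have c: "c \<in> carrier G" "c \<notin> D" unfolding c_def using u_carrier square_notin_D[OF u_mem] by auto
  have "inj_on (\<lambda>n. n \<otimes> c) N" using c N_carrier by (intro inj_onI) auto
  then have "(\<lambda>n. n \<otimes> c) ` (N - {\<one>}) = (\<lambda>n. n \<otimes> c) ` N - {c}"
    using subgroup.one_closed[OF N_subgroup] c by (simp add: inj_on_image_set_diff)
  then show ?thesis using N_mult_c_eq c by auto
qed

definition "e = g \<otimes> inv c"

lemma c_carrier: "c \<in> carrier G" and e_carrier: "e \<in> carrier G"
  unfolding e_def c_def using u_carrier g_carrier by auto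

lemma e_mem_H: "e \<in> H"
proof -
  have "c \<in> H" unfolding c_def using mult_mem_H_of_notin u_carrier u_mem S_out_notin_H by auto
  then show ?thesis unfolding e_def using g_mem_H H_mult H_inv by auto
qed

lemma H_minus_K_subset:
  assumes "h \<in> H" "h \<notin> K"
  shows "\<exists>n\<in>N - {\<one>}. h = e \<otimes> n"
proof -
  obtain m where m: "m \<in> N - {\<one>}" "h = g \<otimes> inv (m \<otimes> c)"
    using mem_H_minus_K[OF assms] D_eq by auto
  then have "h = e \<otimes> inv m"
    unfolding e_def using N_carrier c_carrier g_carrier by (simp add: inv_mult_group m_assoc)
  moreover have "inv m \<in> N - {\<one>}"
    using m subgroup.m_inv_closed[OF N_subgroup] N_carrier by auto
  ultimately show ?thesis by blast
qed

lemma K_ne_e_mult: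
  assumes "k \<in> K" "n \<in> N - {\<one>}"
  shows "k \<noteq> e \<otimes> n"
proof
  assume k: "k = e \<otimes> n"
  have n: "n \<in> carrier G" using assms N_carrier by auto
  have "inv n \<otimes> c \<in> D"
    using D_eq assms(2) subgroup.m_inv_closed[OF N_subgroup] n by auto
  moreover have "k \<otimes> (inv n \<otimes> c) = g"
    using k n c_carrier g_carrier unfolding e_def by (simp add: m_assoc mult_inv_cancel_left)
  ultimately show False using g_ne_K_mult_D[OF assms(1)] by auto
qed

lemma ex_mem_N_notin:
  assumes "finite B" "card B < 3"
  shows "\<exists>n\<in>N. n \<notin> B"
  using ex_not_mem_of_card_less[OF finite_N assms(1)] assms(2) card_N three_le_card_S_out by linarith

lemma e_mem_N: "e \<in> N"
proof (rule ccontr)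
  assume e_notin: "e \<notin> N"
  obtain t where t: "t \<in> N - {\<one>}" using ex_mem_N_notin[of "{\<one>}"] by auto
  have tc: "t \<in> carrier G" "t \<in> H" using t N_carrier N_subset_H by auto
  have "t \<in> K"
  proof (rule ccontr)
    assume "t \<notin> K"
    then obtain n where n: "n \<in> N - {\<one>}" "t = e \<otimes> n" using H_minus_K_subset[OF tc(2)] by blast
    then have "e = t \<otimes> inv n" using N_carrier e_carrier by (simp add: m_assoc)
    moreover have "t \<otimes> inv n \<in> N"
      using t n subgroup.m_closed[OF N_subgroup] subgroup.m_inv_closed[OF N_subgroup] by blast
    ultimately show False using e_notin by simp
  qed
  have "e \<in> K"
  proof (rule ccontr)
    assume "e \<notin> K"
    then obtain n where n: "n \<in> N - {\<one>}" "e \<otimes> \<one> = e \<otimes> n"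
      using H_minus_K_subset[OF e_mem_H] e_carrier by auto
    then show False using N_carrier e_carrier by auto
  qed
  have "e \<noteq> \<one>" "e \<noteq> t" using e_notin t subgroup.one_closed[OF N_subgroup] by auto
  then have "e \<in> S_in" "t \<in> S_in" using \<open>e \<in> K\<close> \<open>t \<in> K\<close> t K_eq by auto
  then have "e \<otimes> t \<in> K" using S_in_mult_mem_K \<open>e \<noteq> t\<close> by blast
  then show False using K_ne_e_mult t by blast
qed

lemma e_eq_one: "e = \<one>"
proof (rule ccontr)
  assume "e \<noteq> \<one>"
  then have "inv e \<in> N - {\<one>}"
    using e_mem_N subgroup.m_inv_closed[OF N_subgroup] e_carrier by auto
  then show False using K_ne_e_mult[of \<one> "inv e"] e_carrier K_eq by simp
qed

text \<open>Now \<open>K \<inter> N = {1}\<close> and \<open>H - K \<subseteq> N\<close>. For \<open>s \<in> S_in\<close> and \<open>n \<in> N - {1, s\<^sup>2}\<close>, the element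
  \<open>t = s\<^sup>-\<^sup>1 n\<close> lies outside \<open>N\<close>, hence in \<open>S_in - {s}\<close>, and \<open>s t = n\<close> contradicts \<open>K \<inter> N = {1}\<close>.\<close>
lemma large_outer_impossible: False
proof -
  have K_N: "k \<noteq> n" if "k \<in> K" "n \<in> N - {\<one>}" for k n
    using K_ne_e_mult[OF that] e_eq_one that N_carrier by auto
  obtain s where s: "s \<in> S_in" using S_in_nonempty by blast
  have sc: "s \<in> carrier G" "s \<in> H" "s \<noteq> \<one>" using s S_in_carrier S_in_subset_H one_notin_S_in by auto
  have s_notin: "s \<notin> N" using K_N[of s s] s sc insert_one_S_in_subset_K by auto
  have "card {\<one>, s \<otimes> s} < 3" by (simp add: card_insert_if)
  then obtain n where n: "n \<in> N" "n \<notin> {\<one>, s \<otimes> s}"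
    using ex_mem_N_notin[of "{\<one>, s \<otimes> s}"] by blast
  have nc: "n \<in> carrier G" "n \<in> H" using n N_carrier N_subset_H by auto
  define t where "t = inv s \<otimes> n"
  have st: "s \<otimes> t = n" unfolding t_def using sc nc by (simp add: mult_inv_cancel_left)
  have "t \<notin> N"
  proof
    assume "t \<in> N"
    then have "t \<otimes> inv n \<in> N"
      using n subgroup.m_closed[OF N_subgroup] subgroup.m_inv_closed[OF N_subgroup] by blast
    moreover have "t \<otimes> inv n = inv s" unfolding t_def using sc nc by (simp add: m_assoc)
    ultimately show False
      using s_notin subgroup.m_inv_closed[OF N_subgroup, of "inv s"] sc by auto
  qed
  moreover have "t \<in> H" unfolding t_def using sc nc H_mult H_inv by auto
  ultimately have "t \<in> K" using H_minus_K_subset e_eq_one N_carrier by fastforce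
  moreover have "t \<noteq> \<one>" "t \<noteq> s" using st n s_notin sc by auto
  ultimately have "t \<in> S_in" using K_eq by auto
  then have "n \<in> K" using S_in_mult_mem_K[OF s] st \<open>t \<noteq> s\<close> by fastforce
  then show False using K_N n by auto
qed

end

context uncovered_element
begin

lemma uncovered_impossible: False
proof -
  obtain u where u: "u \<in> S_out" using S_out_nonempty by blast
  consider "S_in = {}" | "card S_out = 2" | "S_in \<noteq> {}" "3 \<le> card S_out"
    using two_le_card_S_out by linarith
  then show False
  proof cases
    case 1
    interpret uncovered_empty_inner G H S g u by unfold_locales (use 1 u in auto)
    show False by (rule empty_inner_impossible)
  next
    case 2
    then obtain v w where vw: "S_out = {v, w}" "v \<noteq> w" by (auto simp: card_2_iff)
    interpret uncovered_two_outer G H S g v w by unfold_locales (use vw in auto)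
    show False by (rule two_outer_impossible)
  next
    case 3
    interpret uncovered_large_outer G H S g u by unfold_locales (use 3 u in auto)
    show False by (rule large_outer_impossible)
  qed
qed

end

context index_two_subgroup
begin

lemma subset_sums_eq_carrier_of_card_greater:
  assumes "S \<subseteq> carrier G - {\<one>}" "card H < card S"
  shows "subset_sums G S = carrier G"
proof -
  interpret index_two_large_set G H S by unfold_locales (use assms in auto)
  show ?thesis
    using subset_sums_closed[OF S_carrier] outer_coset_subset_sums
      H_subset_subset_sums_of_card_greater[OF assms(2)] by blast
qed

lemma subset_sums_eq_carrier:
  assumes S: "S \<subseteq> carrier G - {\<one>}" "card H \<le> card S"
    and "\<not> comm_group G" "4 \<le> card H"
  shows "subset_sums G S = carrier G"
proof (cases "card H < card S")
  case False
  interpret index_two_large_set G H S by unfold_locales (use S in auto)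
  have "H \<subseteq> subset_sums G S"
  proof
    fix g assume g: "g \<in> H"
    show "g \<in> subset_sums G S"
    proof (rule ccontr)
      assume "g \<notin> subset_sums G S"
      then interpret uncovered_element G H S g by unfold_locales (use assms False g in auto)
      show False by (rule uncovered_impossible)
    qed
  qed
  then show ?thesis using subset_sums_closed[OF S_carrier] outer_coset_subset_sums by blast
qed (use subset_sums_eq_carrier_of_card_greater S in auto)

lemma subset_sums_H_ne_carrier: "subset_sums G (H - {\<one>}) \<noteq> carrier G"
  using subset_sums_subgroup[OF H_subgroup, of "H - {\<one>}"] ex_notin_H by auto

end

lemma crit_num_eqI:
  assumes "\<And>S. S \<subseteq> carrier G - {\<one>\<^bsub>G\<^esub>} \<Longrightarrow> t \<le> card S \<Longrightarrow> subset_sums G S = carrier G"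
    and "S \<subseteq> carrier G - {\<one>\<^bsub>G\<^esub>}" "card S + 1 = t" "subset_sums G S \<noteq> carrier G"
  shows "crit_num G = t"
  unfolding crit_num_def
proof (rule Least_equality)
  fix t' assume t': "\<forall>S. S \<subseteq> carrier G - {\<one>\<^bsub>G\<^esub>} \<longrightarrow> t' \<le> card S \<longrightarrow> subset_sums G S = carrier G"
  show "t \<le> t'"
  proof (rule ccontr)
    assume "\<not> t \<le> t'"
    then have "t' \<le> card S" using assms(3) by linarith
    then show False using t' assms(2,4) by blast
  qed
qed (use assms(1) in blast)

theorem theorem1p3:
  fixes G (structure)
  assumes "group G"
    and "finite (carrier G)"
    and "\<not> comm_group G"
    and "even (order G)"
    and "\<exists>H. subgroup H G \<and> card (rcosets H) = 2"
  shows "(order G = 6 \<longrightarrow> crit_num G = 4) \<and> (order G \<noteq> 6 \<longrightarrow> crit_num G = order G div 2)"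
proof -
  obtain H where H: "subgroup H G" "card (rcosets H) = 2" using assms(5) by blast
  interpret index_two_subgroup G H
    by (intro index_two_subgroup.intro index_two_subgroup_axioms.intro assms(1,2) H)
  have "3 \<le> card H" using comm_group_of_card_le_2 assms(3) by linarith
  show ?thesis
  proof (intro conjI impI)
    assume "order G = 6"
    then have card_H: "card H = 3" using order_eq by simp
    show "crit_num G = 4"
      by (rule crit_num_eqI[where t = 4 and S = "carrier G - H"])
        (use subset_sums_eq_carrier_of_card_greater card_H card_outer_coset
          one_notin_subset_sums_outer_coset[OF card_H assms(3)] in auto)
  next
    assume "order G \<noteq> 6"
    then have "4 \<le> card H" using order_eq \<open>3 \<le> card H\<close> by simp
    then have "crit_num G = card H"
      by (intro crit_num_eqI[where t = "card H" and S = "H - {\<one>}"])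
        (use subset_sums_eq_carrier assms(3) H_subset finite_H subset_sums_H_ne_carrier in auto)
    then show "crit_num G = order G div 2" using order_eq by simp
  qed
qed

end
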